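(* The complex $$\cdots\xrightarrow{Q}\mathcal{D}\otimes H^\ast_{-5}\xrightarrow{Q}\mathcal{D}\otimes H^\ast_{-3}\xrightarrow{Q}\mathcal{D}\otimes H^\ast_{-1}\to0$$ is exact at $\mathcal{D}\otimes H^\ast_{-2n-1}$ for every $n\ge1$; that is, the kernel of $Q:\mathcal{D}\otimes H^\ast_{-2n-1}\to\mathcal{D}\otimes H^\ast_{-2n+1}$ equals $Q(\mathcal{D}\otimes H^\ast_{-2n-3})$.
   Context: $\mathcal{D}=\mathbb{C}[\partial_1,\partial_3,\partial_5,\ldots]$ is a polynomial ring in commuting variables $\partial_{2n-1}$, $n\ge1$. Fermions $\psi_n,\psi^\ast_n$ ($n\in2\mathbb{Z}+1$) satisfy $[\psi_m,\psi_n]_+=[\psi^\ast_m,\psi^\ast_n]_+=0$, $[\psi^\ast_m,\psi_n]_+=\delta_{mn}$. For odd $m$ the bra vacuum $\langle m|$ satisfies $\langle m|\psi_n=0$ ($n\le m$), $\langle m|\psi^\ast_n=0$ ($n>m$), $\langle m-2|\psi_m=\langle m|$; $H^\ast_m$ is the Fock space of bra vectors obtained from $\langle m|$ by right multiplication with products having equal numbers of $\psi$'s and $\psi^\ast$'s. $Q:\mathcal{D}\otimes H^\ast_m\to\mathcal{D}\otimes H^\ast_{m+2}$ is $Q(P\otimes v)=\sum_{n\ge1}\partial_{2n-1}P\otimes v\,\psi_{-(2n-1)}$; $Q^2=0$. *)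

theory Defs
  imports Complex_Main "HOL-Library.Poly_Mapping"
begin

text \<open>Model of bra Fock space: a basis bra vector is a set S of odd integers
(the "occupied" modes).
Right multiplication by psi_k inserts k (zero if k already in S) with sign
(-1)^(number of elements of S greater than k); psi*_k removes k.
This satisfies the CAR and the vacuum conditions of the paper.\<close>

definition vac_set :: "int \<Rightarrow> int set" where
  "vac_set m = {n. odd n \<and> n \<le> m}"

definition fock_state :: "int \<Rightarrow> int set \<Rightarrow> bool" where
  "fock_state m S \<longleftrightarrow> (\<forall>s\<in>S. odd s) \<and> finite (S - vac_set m) \<and> finite (vac_set m - S)
     \<and> card (S - vac_set m) = card (vac_set m - S)"

text \<open>Monomials in the variables d_(2i+1), i = 0,1,2,...: exponent vectors (finitely supported nat-valued maps).
An element of D \<otimes> H*_m is a finitely supported complex combination of pairs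
(monomial, basis bra vector of charge m).\<close>

type_synonym elt = "((nat \<Rightarrow>\<^sub>0 nat) \<times> int set) \<Rightarrow>\<^sub>0 complex"

definition DH :: "int \<Rightarrow> elt set" where
  "DH m = {f. \<forall>x\<in>Poly_Mapping.keys f. fock_state m (snd x)}"

definition psi_sign :: "int set \<Rightarrow> int \<Rightarrow> complex" where
  "psi_sign S k = (-1) ^ card {s\<in>S. s > k}"

text \<open>Q(P \<otimes> v) = \<Sum>_{i\<ge>0} d_{2i+1} P \<otimes> v psi_{-(2i+1)}.\<close>
definition Q :: "elt \<Rightarrow> elt" where
  "Q f = (\<Sum>x\<in>Poly_Mapping.keys f. \<Sum>i\<in>{i::nat. - (2 * int i + 1) \<notin> snd x}.
      Poly_Mapping.single (fst x + Poly_Mapping.single i 1, insert (- (2 * int i + 1)) (snd x))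
        (psi_sign (snd x) (- (2 * int i + 1)) * Poly_Mapping.lookup f x))"

end

theory Submission
  imports Defs
begin

text \<open>\<open>Q\<close> is a Koszul-type differential: it pairs the variable \<open>\<partial>\<^bsub>2i+1\<^esub>\<close> (exponent vector
\<open>var i\<close>) with the fermion \<open>\<psi>\<^bsub>-(2i+1)\<^esub>\<close> (\<open>mode i\<close>). The operator
\<open>K = \<Sum>\<^sub>i \<partial>/\<partial>(\<partial>\<^bsub>2i+1\<^esub>) \<psi>\<^sup>*\<^bsub>-(2i+1)\<^esub>\<close> in the opposite direction satisfies \<open>QK + KQ = E\<close>,
where \<open>E\<close> multiplies a basis vector \<open>P \<otimes> v\<close> by the degree of \<open>P\<close> plus the number of
unoccupied negative modes of \<open>v\<close>. In charge \<open>m < -1\<close> some negative mode is always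
unoccupied, so \<open>E\<close> is invertible; it commutes with \<open>Q\<close>, and \<open>Q f = 0\<close> gives
\<open>f = Q (K (E\<^sup>-\<^sup>1 f))\<close>.\<close>

declare One_nat_def [simp del]

section \<open>Finite sums and exponent vectors\<close>

lemma lookup_sum_sum_single:
  assumes "finite F" "\<forall>x\<in>F. finite (I x)"
  shows "Poly_Mapping.lookup (\<Sum>x\<in>F. \<Sum>i\<in>I x. Poly_Mapping.single (\<phi> x i) (c x i)) y
     = (\<Sum>p\<in>{p\<in>Sigma F I. \<phi> (fst p) (snd p) = y}. c (fst p) (snd p))"
proof -
  have "Poly_Mapping.lookup (\<Sum>x\<in>F. \<Sum>i\<in>I x. Poly_Mapping.single (\<phi> x i) (c x i)) y
     = (\<Sum>x\<in>F. \<Sum>i\<in>I x. if \<phi> x i = y then c x i else 0)"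
    by (simp add: lookup_sum lookup_single when_def eq_commute)
  also have "\<dots> = (\<Sum>p\<in>Sigma F I. if \<phi> (fst p) (snd p) = y then c (fst p) (snd p) else 0)"
    using assms by (subst sum.Sigma) (auto simp: split_def)
  also have "\<dots> = (\<Sum>p\<in>{p\<in>Sigma F I. \<phi> (fst p) (snd p) = y}. c (fst p) (snd p))"
    using assms by (subst sum.inter_filter) (auto intro: finite_SigmaI)
  finally show ?thesis .
qed

lemma keys_sum_sum_single:
  assumes "y \<in> Poly_Mapping.keys (\<Sum>x\<in>F. \<Sum>i\<in>I x. Poly_Mapping.single (\<phi> x i) (c x i))"
  shows "\<exists>x\<in>F. \<exists>i\<in>I x. y = \<phi> x i"
proof -
  obtain x where x: "x \<in> F" and y: "y \<in> Poly_Mapping.keys (\<Sum>i\<in>I x. Poly_Mapping.single (\<phi> x i) (c x i))"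
    using assms keys_sum[of "\<lambda>x. \<Sum>i\<in>I x. Poly_Mapping.single (\<phi> x i) (c x i)" F] by blast
  then obtain i where "i \<in> I x" "y \<in> Poly_Mapping.keys (Poly_Mapping.single (\<phi> x i) (c x i))"
    using keys_sum[of "\<lambda>i. Poly_Mapping.single (\<phi> x i) (c x i)" "I x"] by blast
  with x show ?thesis by (auto split: if_splits)
qed

lemma sum_off_diagonal_antisym_eq_0:
  fixes F :: "'b \<Rightarrow> 'b \<Rightarrow> 'a::{idom, ring_char_0}"
  assumes "finite A" "\<And>i j. i \<in> A \<Longrightarrow> j \<in> A \<Longrightarrow> i \<noteq> j \<Longrightarrow> F j i = - F i j"
  shows "(\<Sum>i\<in>A. \<Sum>j\<in>A - {i}. F i j) = 0"
proof -
  have off: "A - {i} = {j\<in>A. i \<noteq> j}" for i by auto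
  let ?S = "\<Sum>i\<in>A. \<Sum>j\<in>{j\<in>A. i \<noteq> j}. F i j"
  have "?S = (\<Sum>j\<in>A. \<Sum>i\<in>{i\<in>A. i \<noteq> j}. F i j)"
    by (rule sum.swap_restrict[OF assms(1) assms(1)])
  also have "\<dots> = (\<Sum>j\<in>A. \<Sum>i\<in>{i\<in>A. j \<noteq> i}. - F j i)"
  proof (rule sum.cong[OF refl], rule sum.cong)
    fix j i assume "j \<in> A" "i \<in> {i\<in>A. j \<noteq> i}"
    then show "F i j = - F j i" using assms(2)[of j i] by auto
  qed auto
  also have "\<dots> = - ?S"
    by (simp add: sum_negf)
  finally have "?S + ?S = - ?S + ?S"
    by (rule arg_cong[where f = "\<lambda>x. x + ?S"])
  then have "2 * ?S = 0" by (simp only: mult_2 add.left_inverse)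
  then have "?S = 0" by simp
  then show ?thesis unfolding off .
qed

lemma finite_insert_Diff_insert_iff: "finite (insert a A - insert b B) \<longleftrightarrow> finite (A - B)"
proof -
  have "insert a A - insert b B \<subseteq> insert a (A - B)" "A - B \<subseteq> insert b (insert a A - insert b B)"
    by auto
  then show ?thesis
    using finite_subset by (metis finite_insert)
qed

abbreviation var :: "nat \<Rightarrow> (nat \<Rightarrow>\<^sub>0 nat)" where
  "var i \<equiv> Poly_Mapping.single i 1"

lemma lookup_diff_var_add_one: "i \<in> Poly_Mapping.keys b \<Longrightarrow> Poly_Mapping.lookup (b - var i) i + 1 = Poly_Mapping.lookup b i"
  by (simp add: lookup_minus lookup_single in_keys_iff)

lemma diff_var_add_var: "i \<in> Poly_Mapping.keys b \<Longrightarrow> b - var i + var i = b"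
  by (rule poly_mapping_eqI) (auto simp: lookup_add lookup_minus lookup_single when_def in_keys_iff)

lemma add_var_diff_var [simp]: "b + var i - var i = b"
  by (rule poly_mapping_eqI) (simp add: lookup_add lookup_minus)

lemma diff_var_add_var_commute: "i \<in> Poly_Mapping.keys b \<Longrightarrow> i \<noteq> j \<Longrightarrow> b - var i + var j = b + var j - var i"
  by (rule poly_mapping_eqI) (auto simp: lookup_add lookup_minus lookup_single when_def in_keys_iff)

lemma diff_var_diff_var_commute: "b - var i - var j = b - var j - var i"
  by (rule poly_mapping_eqI) (auto simp: lookup_minus)

lemma in_keys_diff_var_iff: "j \<noteq> i \<Longrightarrow> j \<in> Poly_Mapping.keys (b - var i) \<longleftrightarrow> j \<in> Poly_Mapping.keys b"
  by (auto simp: lookup_minus lookup_single when_def in_keys_iff)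

lemma in_keys_add_var_iff: "j \<in> Poly_Mapping.keys (b + var i) \<longleftrightarrow> j \<in> Poly_Mapping.keys b \<or> j = i"
  by (auto simp: lookup_add lookup_single when_def in_keys_iff)

definition total_degree :: "(nat \<Rightarrow>\<^sub>0 nat) \<Rightarrow> nat" where
  "total_degree b = sum (Poly_Mapping.lookup b) (Poly_Mapping.keys b)"

lemma total_degree_diff_var:
  assumes "i \<in> Poly_Mapping.keys b"
  shows "Suc (total_degree (b - var i)) = total_degree b"
proof -
  have fin: "finite (Poly_Mapping.keys b)" by simp
  have "total_degree (b - var i) = sum (Poly_Mapping.lookup (b - var i)) (Poly_Mapping.keys b)"
    unfolding total_degree_def
    by (rule sum.mono_neutral_left) (auto simp: in_keys_iff lookup_minus)
  also have "\<dots> = Poly_Mapping.lookup (b - var i) i + sum (Poly_Mapping.lookup (b - var i)) (Poly_Mapping.keys b - {i})"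
    by (rule sum.remove[OF fin assms])
  also have "sum (Poly_Mapping.lookup (b - var i)) (Poly_Mapping.keys b - {i})
      = sum (Poly_Mapping.lookup b) (Poly_Mapping.keys b - {i})"
    by (rule sum.cong) (auto simp: lookup_minus lookup_single when_def)
  finally have "Suc (total_degree (b - var i)) = Poly_Mapping.lookup b i + sum (Poly_Mapping.lookup b) (Poly_Mapping.keys b - {i})"
    using lookup_diff_var_add_one[OF assms] by simp
  also have "\<dots> = total_degree b"
    unfolding total_degree_def by (rule sum.remove[OF fin assms, symmetric])
  finally show ?thesis .
qed

section \<open>Modes, holes and signs\<close>

definition mode :: "nat \<Rightarrow> int" where
  "mode i = - (2 * int i + 1)"

lemma mode_eq_iff [simp]: "mode i = mode j \<longleftrightarrow> i = j"
  by (simp add: mode_def)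

lemma mode_less_iff [simp]: "mode i < mode j \<longleftrightarrow> j < i"
  by (simp add: mode_def)

lemma odd_mode: "odd (mode i)"
  by (simp add: mode_def)

lemma inj_mode: "inj mode"
  by (rule injI) simp

lemma negative_odd_is_mode:
  assumes "odd (n::int)" "n < 0"
  shows "\<exists>i. n = mode i"
proof -
  from assms obtain k where "n = 2 * k + 1" "k < 0" by (auto elim!: oddE)
  then show ?thesis by (intro exI[of _ "nat (- k - 1)"]) (simp add: mode_def)
qed

definition holes :: "int set \<Rightarrow> nat set" where
  "holes T = {i. mode i \<notin> T}"

definition removable :: "(nat \<Rightarrow>\<^sub>0 nat) \<Rightarrow> int set \<Rightarrow> nat set" where
  "removable b T = {i \<in> Poly_Mapping.keys b. mode i \<in> T}"

lemma finite_removable [simp]: "finite (removable b T)"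
  by (simp add: removable_def)

lemma holes_Diff_mode: "mode i \<in> T \<Longrightarrow> holes (T - {mode i}) = insert i (holes T)"
  by (auto simp: holes_def)

text \<open>Every Fock state is tame. Tameness keeps the sums over \<open>holes T\<close> finite and the counts
in \<open>psi_sign\<close> meaningful (\<open>card\<close> of an infinite set is 0).\<close>

definition tame :: "int set \<Rightarrow> bool" where
  "tame T \<longleftrightarrow> finite {s\<in>T. s \<ge> 0} \<and> finite (holes T)"

lemma tame_finite_greater: "tame T \<Longrightarrow> finite {s\<in>T. s > k}"
  unfolding tame_def by (rule finite_subset[of _ "{s\<in>T. s \<ge> 0} \<union> {k<..<0}"]) auto

lemma tame_insert: "tame T \<Longrightarrow> tame (insert k T)"
  unfolding tame_def holes_def
  by (auto intro: finite_subset[of _ "insert k {s\<in>T. s \<ge> 0}"] finite_subset[of _ "{i. mode i \<notin> T}"])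

lemma tame_Diff_single: "tame T \<Longrightarrow> tame (T - {k})"
proof -
  assume "tame T"
  moreover have "finite (mode -` {k})" by (rule finite_vimageI[OF _ inj_mode]) simp
  moreover have "holes (T - {k}) \<subseteq> holes T \<union> mode -` {k}" by (auto simp: holes_def)
  moreover have "{s\<in>T - {k}. s \<ge> 0} \<subseteq> {s\<in>T. s \<ge> 0}" by auto
  ultimately show ?thesis
    unfolding tame_def by (meson finite_Un finite_subset)
qed

lemma psi_sign_insert_self [simp]: "psi_sign (insert k T) k = psi_sign T k"
proof -
  have "{s\<in>insert k T. s > k} = {s\<in>T. s > k}" by auto
  then show ?thesis by (simp add: psi_sign_def)
qed

lemma psi_sign_Diff_self [simp]: "psi_sign (T - {k}) k = psi_sign T k"
  unfolding psi_sign_def by (metis (lifting) Diff_iff less_irrefl singletonD)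

lemma psi_sign_mult_self [simp]: "psi_sign T k * psi_sign T k = 1"
  by (simp add: psi_sign_def flip: power_mult_distrib)

lemma psi_sign_mult_self_left [simp]: "psi_sign T k * (psi_sign T k * x) = x"
  by (simp flip: mult.assoc)

lemma psi_sign_insert:
  assumes "k \<notin> T" "finite {s\<in>T. s > j}" "k \<noteq> j"
  shows "psi_sign (insert k T) j = (if k > j then - psi_sign T j else psi_sign T j)"
proof (cases "k > j")
  case True
  then have "{s\<in>insert k T. s > j} = insert k {s\<in>T. s > j}" by auto
  with True assms show ?thesis by (simp add: psi_sign_def)
next
  case False
  then have "{s\<in>insert k T. s > j} = {s\<in>T. s > j}" using assms by auto
  with False show ?thesis by (simp add: psi_sign_def)
qed

lemma psi_sign_Diff_single:
  assumes "k \<in> T" "finite {s\<in>T. s > j}" "k \<noteq> j"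
  shows "psi_sign (T - {k}) j = (if k > j then - psi_sign T j else psi_sign T j)"
proof -
  have "finite {s\<in>T - {k}. s > j}" by (rule finite_subset[OF _ assms(2)]) auto
  then have "psi_sign (insert k (T - {k})) j = (if k > j then - psi_sign (T - {k}) j else psi_sign (T - {k}) j)"
    using assms(3) by (intro psi_sign_insert) auto
  with assms(1) show ?thesis by (auto simp: insert_absorb)
qed

lemma psi_sign_exchange:
  assumes "tame T" "mode i \<in> T" "mode j \<notin> T"
  shows "psi_sign T (mode i) * psi_sign (T - {mode i}) (mode j) =
    - (psi_sign T (mode j) * psi_sign (insert (mode j) T) (mode i))"
proof -
  have "i \<noteq> j" using assms by auto
  then show ?thesis
    using assms tame_finite_greater[OF assms(1)]
    by (cases "i < j") (auto simp: psi_sign_Diff_single psi_sign_insert)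
qed

lemma psi_sign_Diff_exchange:
  assumes "tame T" "mode i \<in> T" "mode j \<in> T" "i \<noteq> j"
  shows "psi_sign T (mode j) * psi_sign (T - {mode j}) (mode i) =
    - (psi_sign T (mode i) * psi_sign (T - {mode i}) (mode j))"
  using assms tame_finite_greater[OF assms(1)]
  by (cases "i < j") (auto simp: psi_sign_Diff_single)

section \<open>The differential and the contracting homotopy\<close>

definition tame_supported :: "elt \<Rightarrow> bool" where
  "tame_supported f \<longleftrightarrow> (\<forall>x\<in>Poly_Mapping.keys f. tame (snd x))"

lemma lookup_eq_0_if_not_tame: "tame_supported f \<Longrightarrow> \<not> tame T \<Longrightarrow> Poly_Mapping.lookup f (b, T) = 0"
  unfolding tame_supported_def by (metis in_keys_iff snd_conv)

lemma Q_altdef: "Q f = (\<Sum>x\<in>Poly_Mapping.keys f. \<Sum>i\<in>holes (snd x).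
    Poly_Mapping.single (fst x + var i, insert (mode i) (snd x))
      (psi_sign (snd x) (mode i) * Poly_Mapping.lookup f x))"
  by (simp add: Q_def mode_def holes_def)

lemma lookup_Q:
  assumes "tame_supported f"
  shows "Poly_Mapping.lookup (Q f) (b, T) =
    (\<Sum>i\<in>removable b T. psi_sign T (mode i) * Poly_Mapping.lookup f (b - var i, T - {mode i}))"
proof -
  let ?J = "{i\<in>removable b T. (b - var i, T - {mode i}) \<in> Poly_Mapping.keys f}"
  have "{p\<in>Sigma (Poly_Mapping.keys f) (\<lambda>x. holes (snd x)).
      (fst (fst p) + var (snd p), insert (mode (snd p)) (snd (fst p))) = (b, T)}
     = (\<lambda>i. ((b - var i, T - {mode i}), i)) ` ?J"
    by (auto simp: holes_def removable_def in_keys_add_var_iff diff_var_add_var insert_absorb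
        intro!: image_eqI)
  moreover have "finite (holes (snd x))" if "x \<in> Poly_Mapping.keys f" for x
    using assms that by (simp add: tame_supported_def tame_def)
  ultimately have "Poly_Mapping.lookup (Q f) (b, T) =
      (\<Sum>p\<in>(\<lambda>i. ((b - var i, T - {mode i}), i)) ` ?J.
        psi_sign (snd (fst p)) (mode (snd p)) * Poly_Mapping.lookup f (fst p))"
    unfolding Q_altdef by (subst lookup_sum_sum_single) auto
  also have "\<dots> = (\<Sum>i\<in>?J. psi_sign T (mode i) * Poly_Mapping.lookup f (b - var i, T - {mode i}))"
    by (subst sum.reindex) (auto simp: inj_on_def)
  also have "\<dots> = (\<Sum>i\<in>removable b T. psi_sign T (mode i) * Poly_Mapping.lookup f (b - var i, T - {mode i}))"
    by (rule sum.mono_neutral_left) (auto simp: in_keys_iff)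
  finally show ?thesis .
qed

lemma keys_Q:
  assumes "y \<in> Poly_Mapping.keys (Q f)"
  obtains x i where "x \<in> Poly_Mapping.keys f" "mode i \<notin> snd x" "y = (fst x + var i, insert (mode i) (snd x))"
  using keys_sum_sum_single[OF assms[unfolded Q_altdef]] that by (auto simp: holes_def)

lemma tame_supported_Q: "tame_supported f \<Longrightarrow> tame_supported (Q f)"
  unfolding tame_supported_def by (metis keys_Q snd_conv tame_insert)

lemma lookup_Q_Q:
  assumes "tame_supported g"
  shows "Poly_Mapping.lookup (Q (Q g)) (b, T) =
    (\<Sum>i\<in>removable b T. \<Sum>j\<in>removable b T - {i}.
      psi_sign T (mode i) * psi_sign (T - {mode i}) (mode j)
        * Poly_Mapping.lookup g (b - var i - var j, T - {mode i} - {mode j}))"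
proof -
  have "removable (b - var i) (T - {mode i}) = removable b T - {i}" for i
    by (auto simp: removable_def in_keys_diff_var_iff)
  then show ?thesis
    by (simp add: lookup_Q assms tame_supported_Q sum_distrib_left mult.assoc)
qed

lemma Q_Q_eq_0:
  assumes "tame_supported g"
  shows "Q (Q g) = 0"
proof (rule poly_mapping_eqI)
  fix y :: "(nat \<Rightarrow>\<^sub>0 nat) \<times> int set"
  obtain b T where y: "y = (b, T)" by (cases y)
  show "Poly_Mapping.lookup (Q (Q g)) y = Poly_Mapping.lookup 0 y"
  proof (cases "tame T")
    case True
    have "Poly_Mapping.lookup (Q (Q g)) (b, T) = 0"
      unfolding lookup_Q_Q[OF assms]
    proof (rule sum_off_diagonal_antisym_eq_0)
      fix i j assume "i \<in> removable b T" "j \<in> removable b T" "i \<noteq> j"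
      moreover have "T - {mode j} - {mode i} = T - {mode i} - {mode j}" by auto
      ultimately show "psi_sign T (mode j) * psi_sign (T - {mode j}) (mode i)
          * Poly_Mapping.lookup g (b - var j - var i, T - {mode j} - {mode i}) =
        - (psi_sign T (mode i) * psi_sign (T - {mode i}) (mode j)
          * Poly_Mapping.lookup g (b - var i - var j, T - {mode i} - {mode j}))"
        by (simp add: removable_def psi_sign_Diff_exchange[OF True, of i j] diff_var_diff_var_commute[of b j i])
    qed simp
    then show ?thesis by (simp add: y)
  qed (simp add: y lookup_eq_0_if_not_tame tame_supported_Q assms)
qed

definition K :: "elt \<Rightarrow> elt" where
  "K f = (\<Sum>x\<in>Poly_Mapping.keys f. \<Sum>i\<in>removable (fst x) (snd x).
    Poly_Mapping.single (fst x - var i, snd x - {mode i})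
      (of_nat (Poly_Mapping.lookup (fst x) i) * psi_sign (snd x) (mode i) * Poly_Mapping.lookup f x))"

lemma lookup_K:
  assumes "tame T"
  shows "Poly_Mapping.lookup (K f) (b, T) = (\<Sum>j\<in>holes T.
    of_nat (Poly_Mapping.lookup b j + 1) * psi_sign T (mode j) * Poly_Mapping.lookup f (b + var j, insert (mode j) T))"
proof -
  let ?J = "{j\<in>holes T. (b + var j, insert (mode j) T) \<in> Poly_Mapping.keys f}"
  have "{p\<in>Sigma (Poly_Mapping.keys f) (\<lambda>x. removable (fst x) (snd x)).
      (fst (fst p) - var (snd p), snd (fst p) - {mode (snd p)}) = (b, T)}
     = (\<lambda>j. ((b + var j, insert (mode j) T), j)) ` ?J" (is "?L = _")
  proof (intro set_eqI iffI)
    fix p assume "p \<in> ?L"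
    then obtain a S i where "p = ((a, S), i)" "(a, S) \<in> Poly_Mapping.keys f" "i \<in> removable a S"
      "a - var i = b" "S - {mode i} = T"
      by (cases p) auto
    then show "p \<in> (\<lambda>j. ((b + var j, insert (mode j) T), j)) ` ?J"
      by (auto simp: removable_def holes_def diff_var_add_var insert_absorb intro!: image_eqI[of _ _ i])
  qed (auto simp: holes_def removable_def in_keys_add_var_iff insert_absorb)
  then have "Poly_Mapping.lookup (K f) (b, T) =
      (\<Sum>p\<in>(\<lambda>j. ((b + var j, insert (mode j) T), j)) ` ?J.
        of_nat (Poly_Mapping.lookup (fst (fst p)) (snd p)) * psi_sign (snd (fst p)) (mode (snd p))
          * Poly_Mapping.lookup f (fst p))"
    unfolding K_def by (subst lookup_sum_sum_single) auto
  also have "\<dots> = (\<Sum>j\<in>?J. of_nat (Poly_Mapping.lookup b j + 1) * psi_sign T (mode j)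
      * Poly_Mapping.lookup f (b + var j, insert (mode j) T))"
    by (subst sum.reindex) (auto simp: inj_on_def lookup_add)
  also have "\<dots> = (\<Sum>j\<in>holes T. of_nat (Poly_Mapping.lookup b j + 1) * psi_sign T (mode j)
      * Poly_Mapping.lookup f (b + var j, insert (mode j) T))"
    using assms by (intro sum.mono_neutral_left) (auto simp: in_keys_iff tame_def)
  finally show ?thesis .
qed

lemma keys_K:
  assumes "y \<in> Poly_Mapping.keys (K f)"
  obtains x i where "x \<in> Poly_Mapping.keys f" "mode i \<in> snd x" "y = (fst x - var i, snd x - {mode i})"
  using keys_sum_sum_single[OF assms[unfolded K_def]] that by (auto simp: removable_def)

lemma tame_supported_K: "tame_supported f \<Longrightarrow> tame_supported (K f)"
  unfolding tame_supported_def by (metis keys_K snd_conv tame_Diff_single)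

lemma lookup_K_at_diff_var:
  assumes "tame T" "i \<in> removable b T"
  shows "Poly_Mapping.lookup (K u) (b - var i, T - {mode i}) =
    of_nat (Poly_Mapping.lookup b i) * psi_sign T (mode i) * Poly_Mapping.lookup u (b, T) +
    (\<Sum>j\<in>holes T. of_nat (Poly_Mapping.lookup b j + 1) * psi_sign (T - {mode i}) (mode j)
        * Poly_Mapping.lookup u (b + var j - var i, insert (mode j) T - {mode i}))"
proof -
  from assms(2) have ib: "i \<in> Poly_Mapping.keys b" and iT: "mode i \<in> T"
    by (auto simp: removable_def)
  have "finite (holes T)" "i \<notin> holes T" using assms(1) iT by (auto simp: tame_def holes_def)
  moreover have "Poly_Mapping.lookup (b - var i) j = Poly_Mapping.lookup b j"
    and "b - var i + var j = b + var j - var i"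
    and "insert (mode j) (T - {mode i}) = insert (mode j) T - {mode i}" if "j \<in> holes T" for j
    using that iT ib by (auto simp: holes_def lookup_minus lookup_single when_def intro!: diff_var_add_var_commute)
  ultimately show ?thesis
    using iT by (simp add: lookup_K tame_Diff_single assms(1) holes_Diff_mode lookup_diff_var_add_one[OF ib, symmetric]
        diff_var_add_var[OF ib] insert_absorb cong: sum.cong)
qed

lemma lookup_Q_at_add_var:
  assumes "tame_supported u" "mode j \<notin> T"
  shows "Poly_Mapping.lookup (Q u) (b + var j, insert (mode j) T) =
    psi_sign T (mode j) * Poly_Mapping.lookup u (b, T) +
    (\<Sum>i\<in>removable b T. psi_sign (insert (mode j) T) (mode i)
        * Poly_Mapping.lookup u (b + var j - var i, insert (mode j) T - {mode i}))"
proof -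
  have "removable (b + var j) (insert (mode j) T) = insert j (removable b T)"
    by (auto simp: removable_def in_keys_add_var_iff)
  moreover have "j \<notin> removable b T" "insert (mode j) T - {mode j} = T"
    using assms(2) by (auto simp: removable_def)
  ultimately show ?thesis by (simp add: lookup_Q[OF assms(1)])
qed

lemma lookup_Q_K:
  assumes "tame T" "tame_supported u"
  shows "Poly_Mapping.lookup (Q (K u)) (b, T) =
    (\<Sum>i\<in>removable b T. of_nat (Poly_Mapping.lookup b i)) * Poly_Mapping.lookup u (b, T) +
    (\<Sum>i\<in>removable b T. \<Sum>j\<in>holes T. of_nat (Poly_Mapping.lookup b j + 1)
      * (psi_sign T (mode i) * psi_sign (T - {mode i}) (mode j))
      * Poly_Mapping.lookup u (b + var j - var i, insert (mode j) T - {mode i}))"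
proof -
  have "psi_sign T (mode i) * Poly_Mapping.lookup (K u) (b - var i, T - {mode i}) =
    of_nat (Poly_Mapping.lookup b i) * Poly_Mapping.lookup u (b, T) +
    (\<Sum>j\<in>holes T. of_nat (Poly_Mapping.lookup b j + 1)
      * (psi_sign T (mode i) * psi_sign (T - {mode i}) (mode j))
      * Poly_Mapping.lookup u (b + var j - var i, insert (mode j) T - {mode i}))"
    if "i \<in> removable b T" for i
    by (simp add: lookup_K_at_diff_var[OF assms(1) that] algebra_simps sum_distrib_left)
  then show ?thesis
    by (simp add: lookup_Q tame_supported_K assms(2) sum.distrib sum_distrib_right cong: sum.cong)
qed

lemma lookup_K_Q:
  assumes "tame T" "tame_supported u"
  shows "Poly_Mapping.lookup (K (Q u)) (b, T) =
    (\<Sum>j\<in>holes T. of_nat (Poly_Mapping.lookup b j + 1)) * Poly_Mapping.lookup u (b, T) +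
    (\<Sum>j\<in>holes T. \<Sum>i\<in>removable b T. of_nat (Poly_Mapping.lookup b j + 1)
      * (psi_sign T (mode j) * psi_sign (insert (mode j) T) (mode i))
      * Poly_Mapping.lookup u (b + var j - var i, insert (mode j) T - {mode i}))"
proof -
  have "of_nat (Poly_Mapping.lookup b j + 1) * psi_sign T (mode j)
      * Poly_Mapping.lookup (Q u) (b + var j, insert (mode j) T) =
    of_nat (Poly_Mapping.lookup b j + 1) * Poly_Mapping.lookup u (b, T) +
    (\<Sum>i\<in>removable b T. of_nat (Poly_Mapping.lookup b j + 1)
      * (psi_sign T (mode j) * psi_sign (insert (mode j) T) (mode i))
      * Poly_Mapping.lookup u (b + var j - var i, insert (mode j) T - {mode i}))"
    if "j \<in> holes T" for j
    using that
    by (simp add: lookup_Q_at_add_var[OF assms(2)] holes_def algebra_simps sum_distrib_left)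
  then show ?thesis
    unfolding lookup_K[OF assms(1)] by (simp only: sum.distrib sum_distrib_right cong: sum.cong)
qed

definition euler :: "(nat \<Rightarrow>\<^sub>0 nat) \<Rightarrow> int set \<Rightarrow> complex" where
  "euler b T = of_nat (total_degree b + card (holes T))"

lemma euler_split:
  assumes "tame T"
  shows "euler b T = (\<Sum>i\<in>removable b T. of_nat (Poly_Mapping.lookup b i))
    + (\<Sum>j\<in>holes T. of_nat (Poly_Mapping.lookup b j + 1))"
proof -
  have fin: "finite (holes T)" using assms by (simp add: tame_def)
  have "total_degree b = sum (Poly_Mapping.lookup b) (removable b T \<union> holes T)"
    unfolding total_degree_def
    by (rule sum.mono_neutral_left) (use fin in \<open>auto simp: removable_def holes_def in_keys_iff\<close>)
  also have "\<dots> = sum (Poly_Mapping.lookup b) (removable b T) + sum (Poly_Mapping.lookup b) (holes T)"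
    by (rule sum.union_disjoint) (use fin in \<open>auto simp: removable_def holes_def\<close>)
  finally show ?thesis
    by (simp add: euler_def sum.distrib fin)
qed

text \<open>The cross terms cancel by \<open>psi_sign_exchange\<close>, that is, by the anticommutation
of \<open>\<psi>\<^sup>*\<^sub>-\<^sub>(\<^sub>2\<^sub>i\<^sub>+\<^sub>1\<^sub>)\<close> with \<open>\<psi>\<^sub>-\<^sub>(\<^sub>2\<^sub>j\<^sub>+\<^sub>1\<^sub>)\<close> for \<open>i \<noteq> j\<close>.\<close>

lemma lookup_QK_plus_KQ:
  assumes "tame T" "tame_supported u"
  shows "Poly_Mapping.lookup (Q (K u)) (b, T) + Poly_Mapping.lookup (K (Q u)) (b, T)
    = euler b T * Poly_Mapping.lookup u (b, T)"
proof -
  let ?U = "\<lambda>i j. Poly_Mapping.lookup u (b + var j - var i, insert (mode j) T - {mode i})"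
  let ?c = "\<lambda>j. of_nat (Poly_Mapping.lookup b j + 1) :: complex"
  have "(\<Sum>i\<in>removable b T. \<Sum>j\<in>holes T. ?c j * (psi_sign T (mode i) * psi_sign (T - {mode i}) (mode j)) * ?U i j)
      = (\<Sum>i\<in>removable b T. \<Sum>j\<in>holes T. - (?c j * (psi_sign T (mode j) * psi_sign (insert (mode j) T) (mode i)) * ?U i j))"
    by (intro sum.cong refl) (simp add: psi_sign_exchange[OF assms(1)] removable_def holes_def)
  also have "\<dots> = - (\<Sum>i\<in>removable b T. \<Sum>j\<in>holes T. ?c j * (psi_sign T (mode j) * psi_sign (insert (mode j) T) (mode i)) * ?U i j)"
    by (simp add: sum_negf)
  also have "\<dots> = - (\<Sum>j\<in>holes T. \<Sum>i\<in>removable b T. ?c j * (psi_sign T (mode j) * psi_sign (insert (mode j) T) (mode i)) * ?U i j)"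
    by (subst sum.swap) (rule refl)
  finally show ?thesis
    by (simp add: lookup_Q_K lookup_K_Q assms euler_split algebra_simps)
qed

lemma euler_at_diff_var:
  assumes "tame T" "i \<in> removable b T"
  shows "euler (b - var i) (T - {mode i}) = euler b T"
proof -
  have "finite (holes T)" "i \<notin> holes T" "mode i \<in> T" "i \<in> Poly_Mapping.keys b"
    using assms by (auto simp: tame_def holes_def removable_def)
  then have "total_degree (b - var i) + card (holes (T - {mode i})) = total_degree b + card (holes T)"
    using total_degree_diff_var[of i b] by (simp add: holes_Diff_mode)
  then show ?thesis
    unfolding euler_def by (simp only:)
qed

definition divide_euler :: "elt \<Rightarrow> elt" where
  "divide_euler f = Poly_Mapping.mapp (\<lambda>x v. v / euler (fst x) (snd x)) f"

lemma lookup_divide_euler: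
  "Poly_Mapping.lookup (divide_euler f) x = Poly_Mapping.lookup f x / euler (fst x) (snd x)"
  by (simp add: divide_euler_def lookup_mapp when_def in_keys_iff)

lemma divide_euler_0 [simp]: "divide_euler 0 = 0"
  by (rule poly_mapping_eqI) (simp add: lookup_divide_euler)

lemma tame_supported_divide_euler: "tame_supported f \<Longrightarrow> tame_supported (divide_euler f)"
  using keys_mapp_subset[of "\<lambda>x v. v / euler (fst x) (snd x)" f]
  unfolding tame_supported_def divide_euler_def by blast

lemma Q_divide_euler:
  assumes "tame_supported f"
  shows "Q (divide_euler f) = divide_euler (Q f)"
proof (rule poly_mapping_eqI)
  fix y :: "(nat \<Rightarrow>\<^sub>0 nat) \<times> int set"
  obtain b T where y: "y = (b, T)" by (cases y)
  have "Poly_Mapping.lookup (Q (divide_euler f)) (b, T) = Poly_Mapping.lookup (divide_euler (Q f)) (b, T)"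
  proof (cases "tame T")
    case True
    have "Poly_Mapping.lookup (Q (divide_euler f)) (b, T) = (\<Sum>i\<in>removable b T.
        psi_sign T (mode i) * Poly_Mapping.lookup (divide_euler f) (b - var i, T - {mode i}))"
      by (rule lookup_Q[OF tame_supported_divide_euler[OF assms]])
    also have "\<dots> = (\<Sum>i\<in>removable b T.
        psi_sign T (mode i) * Poly_Mapping.lookup f (b - var i, T - {mode i}) / euler b T)"
      by (intro sum.cong refl) (simp add: lookup_divide_euler euler_at_diff_var[OF True])
    also have "\<dots> = Poly_Mapping.lookup (divide_euler (Q f)) (b, T)"
      by (simp only: lookup_divide_euler lookup_Q[OF assms] sum_divide_distrib fst_conv snd_conv)
    finally show ?thesis .
  next
    case False
    then show ?thesis
      by (simp add: lookup_eq_0_if_not_tame lookup_divide_euler tame_supported_Q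
          tame_supported_divide_euler assms)
  qed
  then show "Poly_Mapping.lookup (Q (divide_euler f)) y = Poly_Mapping.lookup (divide_euler (Q f)) y"
    by (simp only: y)
qed

lemma Q_K_divide_euler:
  assumes "tame_supported f" "Q f = 0" "\<And>b T. (b, T) \<in> Poly_Mapping.keys f \<Longrightarrow> euler b T \<noteq> 0"
  shows "Q (K (divide_euler f)) = f"
proof (rule poly_mapping_eqI)
  fix y :: "(nat \<Rightarrow>\<^sub>0 nat) \<times> int set"
  obtain b T where y: "y = (b, T)" by (cases y)
  have "K (Q (divide_euler f)) = 0"
    unfolding Q_divide_euler[OF assms(1)] assms(2) by (simp add: K_def)
  show "Poly_Mapping.lookup (Q (K (divide_euler f))) y = Poly_Mapping.lookup f y"
  proof (cases "tame T")
    case True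
    then have "Poly_Mapping.lookup (Q (K (divide_euler f))) (b, T) =
        euler b T * (Poly_Mapping.lookup f (b, T) / euler b T)"
      using lookup_QK_plus_KQ[of T "divide_euler f" b] \<open>K (Q (divide_euler f)) = 0\<close>
      by (simp add: tame_supported_divide_euler assms(1) lookup_divide_euler)
    also have "\<dots> = Poly_Mapping.lookup f (b, T)"
      using assms(3)[of b T] by (cases "(b, T) \<in> Poly_Mapping.keys f") (auto simp: in_keys_iff)
    finally show ?thesis by (simp add: y)
  qed (simp add: y lookup_eq_0_if_not_tame tame_supported_Q tame_supported_K
      tame_supported_divide_euler assms(1))
qed

section \<open>Fock states\<close>

definition charge :: "int set \<Rightarrow> int set \<Rightarrow> int" where
  "charge S V = int (card (S - V)) - int (card (V - S))"

lemma charge_insert_left: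
  assumes "finite (S - V)" "finite (V - S)" "k \<notin> S"
  shows "charge (insert k S) V = charge S V + 1"
proof (cases "k \<in> V")
  case True
  have "card (V - S) = Suc (card (V - S - {k}))"
    using assms True by (intro card.remove) auto
  moreover have "insert k S - V = S - V" "V - insert k S = V - S - {k}"
    using True by auto
  ultimately show ?thesis by (simp add: charge_def)
next
  case False
  then have "insert k S - V = insert k (S - V)" "V - insert k S = V - S" by auto
  with assms show ?thesis by (simp add: charge_def)
qed

lemma charge_insert_right:
  assumes "finite (S - V)" "finite (V - S)" "v \<notin> V"
  shows "charge S (insert v V) = charge S V - 1"
proof (cases "v \<in> S")
  case True
  have "card (S - V) = Suc (card (S - V - {v}))"
    using assms True by (intro card.remove) auto
  moreover have "S - insert v V = S - V - {v}" "insert v V - S = V - S"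
    using True by auto
  ultimately show ?thesis by (simp add: charge_def)
next
  case False
  then have "S - insert v V = S - V" "insert v V - S = insert v (V - S)" by auto
  with assms show ?thesis by (simp add: charge_def)
qed

lemma fock_state_iff_charge:
  "fock_state m S \<longleftrightarrow> (\<forall>s\<in>S. odd s) \<and> finite (S - vac_set m) \<and> finite (vac_set m - S)
    \<and> charge S (vac_set m) = 0"
  unfolding fock_state_def charge_def by auto

lemma odd_less_imp_le_minus_2: "odd (n::int) \<Longrightarrow> odd m \<Longrightarrow> n < m \<Longrightarrow> n \<le> m - 2"
  by (elim oddE) presburger

lemma vac_set_eq_insert: "odd m \<Longrightarrow> vac_set m = insert m (vac_set (m - 2))"
  unfolding vac_set_def using odd_less_imp_le_minus_2 by force

lemma fock_state_insert_iff:
  assumes "odd m" "odd k" "k \<notin> S"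
  shows "fock_state m (insert k S) \<longleftrightarrow> fock_state (m - 2) S"
proof -
  define V where "V = vac_set (m - 2)"
  have vm: "vac_set m = insert m V" "m \<notin> V"
    using vac_set_eq_insert[OF assms(1)] by (simp_all add: V_def vac_set_def)
  have odd: "(\<forall>s\<in>insert k S. odd s) \<longleftrightarrow> (\<forall>s\<in>S. odd s)"
    using assms(2) by simp
  have "charge (insert k S) (insert m V) = charge S V"
    if "finite (S - V)" "finite (V - S)"
  proof -
    have "finite (insert k S - V)" "finite (V - insert k S)"
      using that by (auto intro: finite_subset[of _ "insert k (S - V)"] finite_subset[of _ "V - S"])
    then show ?thesis
      using that assms(3) vm(2) by (simp add: charge_insert_left charge_insert_right)
  qed
  then show ?thesis
    unfolding fock_state_iff_charge vm(1) V_def[symmetric] finite_insert_Diff_insert_iff odd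
    by (simp cong: conj_cong)
qed

lemma fock_state_tame:
  assumes "fock_state m T"
  shows "tame T"
proof -
  have fin: "finite (T - vac_set m)" "finite (vac_set m - T)"
    using assms unfolding fock_state_def by auto
  have "{s\<in>T. s \<ge> 0} \<subseteq> (T - vac_set m) \<union> {0..m}"
    by (auto simp: vac_set_def)
  moreover have "holes T \<subseteq> mode -` (vac_set m - T) \<union> {..<nat (- m)}"
    using odd_mode by (auto simp: holes_def vac_set_def mode_def)
  moreover have "finite (mode -` (vac_set m - T))"
    by (rule finite_vimageI[OF fin(2) inj_mode])
  ultimately show ?thesis
    unfolding tame_def using fin by (auto intro: finite_subset)
qed

text \<open>This is where \<open>m < -1\<close> enters: a state with all negative modes occupied contains
\<open>vac_set (-1)\<close>, so its charge is at least \<open>-1\<close>.\<close>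

lemma fock_state_holes_nonempty:
  assumes "fock_state m T" "m < -1"
  shows "holes T \<noteq> {}"
proof
  assume "holes T = {}"
  then have all: "mode i \<in> T" for i by (auto simp: holes_def)
  have "vac_set m - T = {}"
    using assms(2) all negative_odd_is_mode by (force simp: vac_set_def)
  moreover have "card (T - vac_set m) = card (vac_set m - T)"
    using assms(1) unfolding fock_state_def by simp
  ultimately have "card (T - vac_set m) = 0" by (simp only: card.empty)
  moreover have "finite (T - vac_set m)"
    using assms(1) unfolding fock_state_def by simp
  ultimately have "T - vac_set m = {}" by simp
  moreover have "mode 0 \<in> T - vac_set m"
    using all[of 0] assms(2) by (simp add: vac_set_def mode_def)
  ultimately show False by blast
qed

lemma euler_neq_0:
  assumes "fock_state m T" "m < -1"
  shows "euler b T \<noteq> 0"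
  using fock_state_holes_nonempty[OF assms] fock_state_tame[OF assms(1)]
  unfolding euler_def of_nat_eq_0_iff by (simp add: tame_def)

lemma DH_tame_supported: "f \<in> DH m \<Longrightarrow> tame_supported f"
  unfolding DH_def tame_supported_def using fock_state_tame by blast

lemma Q_in_DH:
  assumes "odd m" "f \<in> DH (m - 2)"
  shows "Q f \<in> DH m"
  unfolding DH_def
proof (rule CollectI, rule ballI)
  fix y assume "y \<in> Poly_Mapping.keys (Q f)"
  then obtain x i where "x \<in> Poly_Mapping.keys f" "mode i \<notin> snd x" "y = (fst x + var i, insert (mode i) (snd x))"
    by (rule keys_Q)
  with assms show "fock_state m (snd y)"
    by (simp add: DH_def fock_state_insert_iff odd_mode)
qed

lemma K_in_DH:
  assumes "odd m" "f \<in> DH m"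
  shows "K f \<in> DH (m - 2)"
  unfolding DH_def
proof (rule CollectI, rule ballI)
  fix y assume "y \<in> Poly_Mapping.keys (K f)"
  then obtain x i where x: "x \<in> Poly_Mapping.keys f" "mode i \<in> snd x" "y = (fst x - var i, snd x - {mode i})"
    by (rule keys_K)
  then have "fock_state m (insert (mode i) (snd x - {mode i}))"
    using assms(2) by (simp add: DH_def insert_absorb)
  moreover have "mode i \<notin> snd x - {mode i}" by simp
  ultimately show "fock_state (m - 2) (snd y)"
    using fock_state_insert_iff[OF assms(1) odd_mode] x(3) by (metis snd_conv)
qed

lemma divide_euler_in_DH: "f \<in> DH m \<Longrightarrow> divide_euler f \<in> DH m"
  using keys_mapp_subset[of "\<lambda>x v. v / euler (fst x) (snd x)" f]
  unfolding DH_def divide_euler_def by blast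

lemma kernel_Q_eq_image_Q:
  assumes "odd m" "m < -1"
  shows "{f \<in> DH m. Q f = 0} = Q ` DH (m - 2)"
proof (intro set_eqI iffI)
  fix f assume "f \<in> {f \<in> DH m. Q f = 0}"
  then have f: "f \<in> DH m" "Q f = 0" by auto
  have "Q (K (divide_euler f)) = f"
    using f assms(2) by (intro Q_K_divide_euler) (auto simp: DH_tame_supported DH_def euler_neq_0)
  moreover have "K (divide_euler f) \<in> DH (m - 2)"
    using assms(1) f(1) by (intro K_in_DH divide_euler_in_DH)
  ultimately show "f \<in> Q ` DH (m - 2)" by (metis image_eqI)
next
  fix f assume "f \<in> Q ` DH (m - 2)"
  then obtain g where "g \<in> DH (m - 2)" "f = Q g" by blast
  then show "f \<in> {f \<in> DH m. Q f = 0}"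
    using assms(1) by (simp add: Q_in_DH Q_Q_eq_0 DH_tame_supported)
qed

theorem lemma1:
  fixes n :: nat
  assumes "n \<ge> 1"
  shows "{f \<in> DH (- 2 * int n - 1). Q f = 0} = Q ` DH (- 2 * int n - 3)"
proof -
  have "odd (- 2 * int n - 1)" by presburger
  moreover have "- 2 * int n - 1 < -1" using assms by simp
  moreover have "- 2 * int n - 3 = (- 2 * int n - 1) - 2" by simp
  ultimately show ?thesis using kernel_Q_eq_image_Q by presburger
qed

end
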